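(* Let $K=2$ and let $N\ge 0$ be an integer. Then there exists a pair $(n_1^\star,n_2^\star)$ of nonnegative integers with $n_1^\star+n_2^\star=N$ which minimizes $\mathbb{E}[u(n_1,n_2)]$ over all pairs of nonnegative integers $(n_1,n_2)$ with $n_1+n_2=N$, and which satisfies $|n_1^\star-n_2^\star|\le 1$.
   Context: Fix an integer $K\ge 2$. An initial assortment is a vector $\vec n=(n_1,\dots,n_K)$ of nonnegative integers ($n_i$ is the initial stock of goodie type $i$), with $N=\sum_i n_i$ attendees. Attendees arrive one at a time: the stocks start at $\vec n^{(0)}=\vec n$; at each step $t=1,2,\dots$, as long as at least two coordinates of the current stock vector $\vec n^{(t-1)}$ are nonzero, attendee $t$ chooses an index $i$ uniformly at random (independently of the past) among the indices with $n_i^{(t-1)}>0$, and $\vec n^{(t)}=\vec n^{(t-1)}-\vec e_i$, where $\vec e_i$ is the $i$-th standard unit vector. Let $T$ be the first time at which at most one coordinate of $\vec n^{(T)}$ is nonzero. The remaining attendees, who have only one type available, are called unhappy; their number is the random variable $u(\vec n)=N-T$. *)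

theory Defs
  imports "HOL-Probability.Probability"
begin

text \<open>Stock vector n = (n_1,...,n_K) represented as a list of length K.
  unhappy_pmf ns is the distribution of the number u(n) of unhappy attendees:
  if at most one coordinate is nonzero, all remaining attendees are unhappy;
  otherwise the next attendee picks uniformly among the available types.\<close>

definition avail :: "nat list \<Rightarrow> nat set" where
  "avail ns = {i. i < length ns \<and> ns ! i > 0}"

function unhappy_pmf :: "nat list \<Rightarrow> nat pmf" where
  "unhappy_pmf ns =
     (if card (avail ns) \<le> 1 then return_pmf (sum_list ns)
      else bind_pmf (pmf_of_set (avail ns))
             (\<lambda>i. unhappy_pmf (ns[i := ns ! i - 1])))"
  by pat_completeness auto
termination
proof (relation "Wellfounded.measure sum_list")
  show "wf (Wellfounded.measure sum_list)" by simp
next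
  fix ns i
  assume c: "\<not> card (avail ns) \<le> 1" and i: "i \<in> set_pmf (pmf_of_set (avail ns))"
  have fin: "finite (avail ns)" unfolding avail_def by simp
  have ne: "avail ns \<noteq> {}" using c by auto
  have "i \<in> avail ns" using i fin ne by simp
  hence il: "i < length ns" and ip: "ns ! i > 0" unfolding avail_def by auto
  have le: "ns ! i \<le> sum_list ns" using il by (simp add: elem_le_sum_list)
  have "sum_list (ns[i := ns ! i - 1]) = sum_list ns - ns ! i + (ns ! i - 1)"
    using il le by (simp add: sum_list_update)
  with le show "(ns[i := ns ! i - 1], ns) \<in> Wellfounded.measure sum_list" using ip by simp
qed

definition expected_unhappy :: "nat list \<Rightarrow> real" where
  "expected_unhappy ns = measure_pmf.expectation (unhappy_pmf ns) real"

end

theory Submission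
  imports Defs
begin

text \<open>For two types write \<open>E a b\<close> for the expected number of unhappy attendees. It satisfies
  \<open>E a 0 = E 0 a = a\<close> and \<open>E a b = (E (a - 1) b + E a (b - 1)) / 2\<close> otherwise. The decrease
  \<open>D a b = E (a + 1) b - E a (b + 1)\<close> achieved by moving one unit from the first stock to the
  second obeys the same averaging recursion, \<open>D a b = (D (a - 1) b + D a (b - 1)) / 2\<close>, and is
  nonnegative on the boundary: \<open>D a a = 0\<close> by symmetry and \<open>D a 0 \<ge> 0\<close> since \<open>E a 1 \<le> a + 1\<close>.
  Hence \<open>D a b \<ge> 0\<close> whenever \<open>b \<le> a\<close>, and repeatedly moving units from the larger to the
  smaller stock never increases \<open>E\<close>, so the balanced split is optimal.\<close>

declare unhappy_pmf.simps[simp del]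

lemma finite_avail: "finite (avail ns)"
  by (simp add: avail_def)

lemma finite_set_unhappy_pmf: "finite (set_pmf (unhappy_pmf ns))"
proof (induction ns rule: unhappy_pmf.induct)
  case (1 ns)
  show ?case
  proof (cases "card (avail ns) \<le> 1")
    case True
    then show ?thesis by (subst unhappy_pmf.simps) simp
  next
    case False
    then have "avail ns \<noteq> {}" by auto
    with 1 False finite_avail show ?thesis
      by (subst unhappy_pmf.simps) auto
  qed
qed

lemma expected_unhappy_stop:
  "card (avail ns) \<le> 1 \<Longrightarrow> expected_unhappy ns = sum_list ns"
  unfolding expected_unhappy_def by (subst unhappy_pmf.simps) simp

lemma expected_unhappy_step:
  assumes "\<not> card (avail ns) \<le> 1"
  shows "expected_unhappy ns =
           (\<Sum>i\<in>avail ns. expected_unhappy (ns[i := ns ! i - 1])) / card (avail ns)"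
proof -
  have "avail ns \<noteq> {}" using assms by auto
  then have "expected_unhappy ns =
      (\<Sum>i\<in>avail ns. expected_unhappy (ns[i := ns ! i - 1]) /\<^sub>R card (avail ns))"
    unfolding expected_unhappy_def using assms
    by (subst unhappy_pmf.simps)
       (simp add: pmf_expectation_bind_pmf_of_set finite_avail finite_set_unhappy_pmf)
  then show ?thesis by (simp add: sum_distrib_left divide_inverse_commute)
qed

lemma expected_unhappy_le_sum_list: "expected_unhappy ns \<le> sum_list ns"
proof (induction ns rule: unhappy_pmf.induct)
  case (1 ns)
  show ?case
  proof (cases "card (avail ns) \<le> 1")
    case True
    then show ?thesis by (simp add: expected_unhappy_stop)
  next
    case False
    then have "avail ns \<noteq> {}" by auto
    then have "set_pmf (pmf_of_set (avail ns)) = avail ns"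
      by (simp add: finite_avail)
    have "expected_unhappy (ns[i := ns ! i - 1]) \<le> sum_list ns" if "i \<in> avail ns" for i
    proof -
      have "i < length ns" "0 < ns ! i" using that by (auto simp: avail_def)
      then have "sum_list (ns[i := ns ! i - 1]) \<le> sum_list ns"
        by (simp add: sum_list_update elem_le_sum_list)
      moreover have "expected_unhappy (ns[i := ns ! i - 1]) \<le> sum_list (ns[i := ns ! i - 1])"
        using 1 False that \<open>set_pmf (pmf_of_set (avail ns)) = avail ns\<close> by simp
      ultimately show ?thesis by linarith
    qed
    then have "(\<Sum>i\<in>avail ns. expected_unhappy (ns[i := ns ! i - 1]))
                 \<le> card (avail ns) * real (sum_list ns)"
      by (rule sum_bounded_above)
    moreover have "0 < card (avail ns)" using False by simp
    ultimately show ?thesis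
      unfolding expected_unhappy_step[OF False] by (simp add: pos_divide_le_eq mult.commute)
  qed
qed

lemma avail_pair: "avail [a, b] = {i. i = 0 \<and> 0 < a \<or> i = 1 \<and> 0 < b}"
  unfolding avail_def by (auto simp: less_Suc_eq)

lemma expected_unhappy_pair_stop:
  assumes "a = 0 \<or> b = 0"
  shows "expected_unhappy [a, b] = a + b"
proof -
  have "card (avail [a, b]) \<le> 1"
    using assms card_le_Suc0_iff_eq[OF finite_avail[of "[a, b]"]] by (auto simp: avail_pair)
  then show ?thesis by (simp add: expected_unhappy_stop)
qed

lemma expected_unhappy_pair_step:
  assumes "0 < a" "0 < b"
  shows "expected_unhappy [a, b] = (expected_unhappy [a - 1, b] + expected_unhappy [a, b - 1]) / 2"
proof -
  have "avail [a, b] = {0, 1}" using assms by (auto simp: avail_pair)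
  then show ?thesis by (simp add: expected_unhappy_step[of "[a, b]"])
qed

lemma expected_unhappy_pair_commute: "expected_unhappy [a, b] = expected_unhappy [b, a]"
proof (induction "a + b" arbitrary: a b rule: less_induct)
  case less
  show ?case
  proof (cases "a = 0 \<or> b = 0")
    case True
    then show ?thesis by (auto simp: expected_unhappy_pair_stop)
  next
    case False
    then have "0 < a" "0 < b" by auto
    with less.hyps[of "a - 1" b] less.hyps[of a "b - 1"] show ?thesis
      by (simp add: expected_unhappy_pair_step)
  qed
qed

lemma expected_unhappy_pair_shift_le:
  "b \<le> a \<Longrightarrow> expected_unhappy [a, b + 1] \<le> expected_unhappy [a + 1, b]"
proof (induction "a + b" arbitrary: a b rule: less_induct)
  case less
  consider "b = 0" | "a = b" | "0 < b" "b < a" using less.prems by linarith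
  then show ?case
  proof cases
    case 1
    then show ?thesis
      using expected_unhappy_le_sum_list[of "[a, 1]"] by (simp add: expected_unhappy_pair_stop)
  next
    case 2
    then show ?thesis by (simp add: expected_unhappy_pair_commute)
  next
    case 3
    have "expected_unhappy [a - 1, b + 1] \<le> expected_unhappy [a, b]"
      using less.hyps[of "a - 1" b] 3 by simp
    moreover have "expected_unhappy [a, b] \<le> expected_unhappy [a + 1, b - 1]"
      using less.hyps[of a "b - 1"] 3 by simp
    ultimately show ?thesis
      using expected_unhappy_pair_step[of a "b + 1"] expected_unhappy_pair_step[of "a + 1" b] 3
      by simp
  qed
qed

lemma expected_unhappy_pair_balanced_le:
  assumes "m1 + m2 = N"
  shows "expected_unhappy [N - N div 2, N div 2] \<le> expected_unhappy [m1, m2]"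
proof -
  have ordered: "expected_unhappy [N - N div 2, N div 2] \<le> expected_unhappy [m1, m2]"
    if "m2 \<le> m1" "m1 + m2 = N" for m1 m2
    using that
  proof (induction "m1 - m2" arbitrary: m1 m2 rule: less_induct)
    case less
    show ?case
    proof (cases "m1 \<le> m2 + 1")
      case True
      with less.prems have "m1 = N - N div 2" "m2 = N div 2" by auto
      then show ?thesis by simp
    next
      case False
      have "expected_unhappy [N - N div 2, N div 2] \<le> expected_unhappy [m1 - 1, m2 + 1]"
        using less False by simp
      also have "\<dots> \<le> expected_unhappy [m1, m2]"
        using expected_unhappy_pair_shift_le[of m2 "m1 - 1"] False by simp
      finally show ?thesis .
    qed
  qed
  show ?thesis
  proof (cases "m2 \<le> m1")
    case True
    then show ?thesis using assms by (rule ordered)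
  next
    case False
    then have "expected_unhappy [N - N div 2, N div 2] \<le> expected_unhappy [m2, m1]"
      using assms by (intro ordered) auto
    then show ?thesis by (simp add: expected_unhappy_pair_commute[of m1])
  qed
qed

theorem theorem1:
  fixes N :: nat
  shows "\<exists>n1 n2. n1 + n2 = N
           \<and> (\<forall>m1 m2. m1 + m2 = N \<longrightarrow> expected_unhappy [n1, n2] \<le> expected_unhappy [m1, m2])
           \<and> \<bar>int n1 - int n2\<bar> \<le> 1"
proof (intro exI conjI allI impI)
  show "N - N div 2 + N div 2 = N" by simp
  show "\<bar>int (N - N div 2) - int (N div 2)\<bar> \<le> 1" by linarith
  show "expected_unhappy [N - N div 2, N div 2] \<le> expected_unhappy [m1, m2]"
    if "m1 + m2 = N" for m1 m2
    using that by (rule expected_unhappy_pair_balanced_le)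
qed

end
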